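(* Let $B$ be a graph having a path-decomposition of width $p$ and a proper $2$-coloring into stable sets $C_1, C_2$ with $|C_1| \ge |C_2|$. Then for every non-negative integer $a$ with $|C_2| - p \le a \le |C_1|$, there exist a set $X$ of at most $p$ vertices of $B$ and a proper $2$-coloring of $B\setminus X$ into stable sets $C'_1, C'_2$ with $|C'_1| = a$. *)

theory Defs
  imports Main
begin

definition graph :: "'a set \<Rightarrow> ('a \<Rightarrow> 'a \<Rightarrow> bool) \<Rightarrow> bool" where
  "graph V E \<longleftrightarrow> finite V \<and> (\<forall>u v. E u v \<longrightarrow> u \<in> V \<and> v \<in> V \<and> u \<noteq> v \<and> E v u)"

definition stable :: "('a \<Rightarrow> 'a \<Rightarrow> bool) \<Rightarrow> 'a set \<Rightarrow> bool" where
  "stable E S \<longleftrightarrow> (\<forall>u\<in>S. \<forall>v\<in>S. \<not> E u v)"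

definition proper_2_coloring :: "'a set \<Rightarrow> ('a \<Rightarrow> 'a \<Rightarrow> bool) \<Rightarrow> 'a set \<Rightarrow> 'a set \<Rightarrow> bool" where
  "proper_2_coloring W E C1 C2 \<longleftrightarrow>
     C1 \<union> C2 = W \<and> C1 \<inter> C2 = {} \<and> stable E C1 \<and> stable E C2"

definition path_decomposition :: "'a set \<Rightarrow> ('a \<Rightarrow> 'a \<Rightarrow> bool) \<Rightarrow> 'a set list \<Rightarrow> bool" where
  "path_decomposition V E bs \<longleftrightarrow>
     bs \<noteq> [] \<and> (\<forall>b\<in>set bs. b \<subseteq> V) \<and>
     (\<forall>v\<in>V. \<exists>b\<in>set bs. v \<in> b) \<and>
     (\<forall>u v. E u v \<longrightarrow> (\<exists>b\<in>set bs. u \<in> b \<and> v \<in> b)) \<and>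
     (\<forall>v i j k. i \<le> j \<and> j \<le> k \<and> k < length bs \<and> v \<in> bs ! i \<and> v \<in> bs ! k \<longrightarrow> v \<in> bs ! j)"

definition pd_width :: "'a set list \<Rightarrow> int" where
  "pd_width bs = int (Max (card ` set bs)) - 1"

end

theory Submission
  imports Defs
begin

text \<open>Order the vertices by the first bag containing them and sweep through them. For a
  prefix P of this order, swap the two colours inside P and delete the boundary of P (the
  vertices of P with a neighbour outside P): what remains is properly 2-coloured. The boundary
  of P lies in the bag where the next vertex first appears, without that vertex, so it has at
  most p elements. The first colour class of this recolouring has |C1| elements for the empty
  prefix, |C2| elements for the whole vertex set, and loses at most one element per step. So
  either it has exactly a elements at some prefix, or at the end we delete |C2| - a \<le> p
  vertices of C2.\<close>

definition boundary :: "'a set \<Rightarrow> ('a \<Rightarrow> 'a \<Rightarrow> bool) \<Rightarrow> 'a set \<Rightarrow> 'a set" where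
  "boundary V E P = {u \<in> P. \<exists>w \<in> V - P. E u w}"

definition swap_on :: "'a set \<Rightarrow> 'a set \<Rightarrow> 'a set \<Rightarrow> 'a set" where
  "swap_on P A B = (A - P) \<union> (B \<inter> P)"

lemma boundary_empty [simp]: "boundary V E {} = {}"
  by (simp add: boundary_def)

lemma swap_on_empty [simp]: "swap_on {} A B = A"
  by (simp add: swap_on_def)

lemma boundary_insert_subset: "boundary V E (insert v P) \<subseteq> insert v (boundary V E P)"
  by (auto simp: boundary_def)

lemma stable_swap_on_Diff_boundary:
  assumes "graph V E" "stable E A" "stable E B"
  shows "stable E (swap_on P A B - boundary V E P)"
  unfolding stable_def
proof (intro ballI notI)
  fix u w assume u: "u \<in> swap_on P A B - boundary V E P"
    and w: "w \<in> swap_on P A B - boundary V E P" and "E u w"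
  then have "w \<in> V" "u \<in> V" "E w u"
    using assms(1) by (auto simp: graph_def)
  then have "u \<in> P \<longleftrightarrow> w \<in> P"
    using u w \<open>E u w\<close> by (auto simp: boundary_def)
  then show False
    using u w \<open>E u w\<close> assms(2,3) by (auto simp: stable_def swap_on_def)
qed

lemma proper_2_coloring_swap_on:
  assumes "graph V E" "proper_2_coloring V E C1 C2"
  shows "proper_2_coloring (V - boundary V E P) E
           (swap_on P C1 C2 - boundary V E P) (swap_on P C2 C1 - boundary V E P)"
  using assms stable_swap_on_Diff_boundary[OF assms(1)]
  by (auto simp: proper_2_coloring_def swap_on_def)

lemma proper_2_coloring_Diff:
  assumes "proper_2_coloring W E C1 C2" "Y \<subseteq> C1"
  shows "proper_2_coloring (W - Y) E (C1 - Y) C2"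
  using assms by (auto simp: proper_2_coloring_def stable_def)

lemma card_swap_on_Diff_boundary_insert:
  assumes "finite A" "finite B"
  shows "card (swap_on P A B - boundary V E P)
           \<le> card (swap_on (insert v P) A B - boundary V E (insert v P)) + 1"
proof -
  let ?D = "\<lambda>P. swap_on P A B - boundary V E P"
  have fin: "finite (?D Q)" for Q
    using assms by (simp add: swap_on_def)
  have "?D P - {v} \<subseteq> ?D (insert v P)"
    using boundary_insert_subset[of V E v P] by (auto simp: swap_on_def)
  then have "card (?D P - {v}) \<le> card (?D (insert v P))"
    using fin by (rule card_mono[rotated])
  then show ?thesis
    using fin by (simp add: card_Diff_singleton_if split: if_splits)
qed

definition first_bag :: "'a set list \<Rightarrow> 'a \<Rightarrow> nat" where
  "first_bag bs v = (LEAST i. v \<in> bs ! i)"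

definition bag_prefix :: "'a set \<Rightarrow> 'a set list \<Rightarrow> 'a set \<Rightarrow> bool" where
  "bag_prefix V bs P \<longleftrightarrow> P \<subseteq> V \<and> (\<forall>u \<in> P. \<forall>w \<in> V - P. first_bag bs u \<le> first_bag bs w)"

lemma first_bag_le: "v \<in> bs ! i \<Longrightarrow> first_bag bs v \<le> i"
  unfolding first_bag_def by (rule Least_le)

lemma first_bag:
  assumes "path_decomposition V E bs" "v \<in> V"
  shows "first_bag bs v < length bs" "v \<in> bs ! first_bag bs v"
proof -
  obtain b where "b \<in> set bs" "v \<in> b"
    using assms unfolding path_decomposition_def by blast
  then obtain i where i: "i < length bs" "v \<in> bs ! i"
    by (auto simp: in_set_conv_nth)
  show "v \<in> bs ! first_bag bs v"
    using i(2) unfolding first_bag_def by (rule LeastI)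
  show "first_bag bs v < length bs"
    using first_bag_le[OF i(2)] i(1) by simp
qed

lemma card_bag_le:
  assumes "pd_width bs = int p" "b \<in> set bs"
  shows "card b \<le> Suc p"
proof -
  have "card b \<le> Max (card ` set bs)"
    using assms(2) by (intro Max_ge) auto
  then show ?thesis
    using assms(1) by (simp add: pd_width_def)
qed

lemma bag_prefix_insert_first:
  assumes "bag_prefix V bs P" "P \<noteq> V"
  obtains v where "v \<in> V - P" "\<And>w. w \<in> V - P \<Longrightarrow> first_bag bs v \<le> first_bag bs w"
    "bag_prefix V bs (insert v P)"
proof -
  obtain v0 where "v0 \<in> V - P"
    using assms by (auto simp: bag_prefix_def)
  then obtain v where v: "v \<in> V - P" and min: "\<And>w. w \<in> V - P \<Longrightarrow> first_bag bs v \<le> first_bag bs w"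
    using ex_has_least_nat[of "\<lambda>x. x \<in> V - P" v0 "first_bag bs"] by blast
  moreover have "bag_prefix V bs (insert v P)"
    using assms(1) v min by (auto simp: bag_prefix_def)
  ultimately show thesis
    using that by blast
qed

text \<open>An edge from u \<in> P to w \<notin> P lies in a bag at or after the first bag of v, while u
  already occurs at or before it; by the interpolation property u lies in that bag.\<close>
lemma boundary_subset_first_bag:
  assumes pd: "path_decomposition V E bs" and "bag_prefix V bs P" and v: "v \<in> V - P"
    and min: "\<And>w. w \<in> V - P \<Longrightarrow> first_bag bs v \<le> first_bag bs w"
  shows "boundary V E P \<subseteq> bs ! first_bag bs v - {v}"
proof
  fix u assume "u \<in> boundary V E P"
  then obtain w where u: "u \<in> P" and w: "w \<in> V - P" and "E u w"
    by (auto simp: boundary_def)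
  obtain b where "b \<in> set bs" "u \<in> b" "w \<in> b"
    using pd \<open>E u w\<close> unfolding path_decomposition_def by blast
  then obtain i where i: "i < length bs" "u \<in> bs ! i" "w \<in> bs ! i"
    by (auto simp: in_set_conv_nth)
  have "u \<in> V"
    using u assms(2) by (auto simp: bag_prefix_def)
  have "first_bag bs u \<le> first_bag bs v"
    using assms(2) u v by (auto simp: bag_prefix_def)
  moreover have "first_bag bs v \<le> i"
    using min[OF w] first_bag_le[OF i(3)] by simp
  moreover have "u \<in> bs ! first_bag bs u"
    using first_bag(2)[OF pd \<open>u \<in> V\<close>] .
  ultimately have "u \<in> bs ! first_bag bs v"
    using pd i(1,2) unfolding path_decomposition_def by (meson le_trans)
  then show "u \<in> bs ! first_bag bs v - {v}"
    using u v by blast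
qed

lemma card_boundary_le_width:
  assumes "graph V E" "path_decomposition V E bs" "pd_width bs = int p"
    and "bag_prefix V bs P" "P \<noteq> V"
  shows "card (boundary V E P) \<le> p"
proof -
  obtain v where v: "v \<in> V - P" and min: "\<And>w. w \<in> V - P \<Longrightarrow> first_bag bs v \<le> first_bag bs w"
    using bag_prefix_insert_first[OF assms(4,5)] by blast
  let ?b = "bs ! first_bag bs v"
  have "?b \<in> set bs" "v \<in> ?b"
    using first_bag[OF assms(2)] v by auto
  moreover have "finite ?b"
  proof -
    have "?b \<subseteq> V"
      using \<open>?b \<in> set bs\<close> assms(2) by (simp add: path_decomposition_def)
    then show ?thesis
      using assms(1) by (meson graph_def finite_subset)
  qed
  ultimately have "card (?b - {v}) \<le> p"
    using card_bag_le[OF assms(3) \<open>?b \<in> set bs\<close>] by simp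
  moreover have "card (boundary V E P) \<le> card (?b - {v})"
    using boundary_subset_first_bag[OF assms(2,4) v min] \<open>finite ?b\<close> by (simp add: card_mono)
  ultimately show ?thesis
    by simp
qed

lemma exists_balanced_swap:
  assumes "graph V E" "path_decomposition V E bs" "pd_width bs = int p"
    and col: "proper_2_coloring V E C1 C2" and "card C2 \<le> a + p"
  shows "bag_prefix V bs P \<Longrightarrow> a \<le> card (swap_on P C1 C2 - boundary V E P) \<Longrightarrow>
    \<exists>Q \<subseteq> V. a \<le> card (swap_on Q C1 C2 - boundary V E Q) \<and>
      card (swap_on Q C1 C2 - boundary V E Q) + card (boundary V E Q) \<le> a + p"
proof (induction "card (V - P)" arbitrary: P rule: less_induct)
  case less
  let ?D = "\<lambda>P. swap_on P C1 C2 - boundary V E P"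
  have "finite V"
    using assms(1) by (simp add: graph_def)
  have cover: "C1 \<union> C2 = V" "C1 \<inter> C2 = {}"
    using col by (auto simp: proper_2_coloring_def)
  then have fin: "finite C1" "finite C2"
    using \<open>finite V\<close> by (metis finite_Un)+
  show ?case
  proof (cases "P = V")
    case True
    then have "boundary V E P = {}" "swap_on P C1 C2 = C2"
      using cover by (auto simp: boundary_def swap_on_def)
    then show ?thesis
      using True less.prems(2) assms(5) by (intro exI[of _ V]) simp
  next
    case False
    obtain v where v: "v \<in> V - P" and prefix: "bag_prefix V bs (insert v P)"
      using bag_prefix_insert_first[OF less.prems(1) \<open>P \<noteq> V\<close>] by blast
    have smaller: "card (V - insert v P) < card (V - P)"
      using v \<open>finite V\<close> by (intro psubset_card_mono) auto
    show ?thesis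
    proof (cases "a \<le> card (?D (insert v P))")
      case True
      then show ?thesis
        using less.hyps[OF smaller prefix] by blast
    next
      case False
      then have "card (?D P) = a"
        using card_swap_on_Diff_boundary_insert[OF fin, of P V E v] less.prems(2) by linarith
      moreover have "card (boundary V E P) \<le> p"
        using card_boundary_le_width[OF assms(1-3) less.prems(1) \<open>P \<noteq> V\<close>] .
      moreover have "P \<subseteq> V"
        using less.prems(1) by (simp add: bag_prefix_def)
      ultimately show ?thesis
        by auto
    qed
  qed
qed

text \<open>Delete the boundary of Q together with the surplus of the recoloured first class.\<close>
lemma proper_2_coloring_from_balanced_swap:
  assumes "graph V E" "proper_2_coloring V E C1 C2" "Q \<subseteq> V"
    and a: "a \<le> card (swap_on Q C1 C2 - boundary V E Q)"
    and p: "card (swap_on Q C1 C2 - boundary V E Q) + card (boundary V E Q) \<le> a + p"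
  shows "\<exists>X C1' C2'. X \<subseteq> V \<and> card X \<le> p \<and>
           proper_2_coloring (V - X) E C1' C2' \<and> card C1' = a"
proof -
  let ?D = "swap_on Q C1 C2 - boundary V E Q"
  have "finite ?D"
    using assms(1,2) unfolding graph_def proper_2_coloring_def swap_on_def by auto
  obtain Y where Y: "Y \<subseteq> ?D" "card Y = card ?D - a"
    using obtain_subset_with_card_n[of "card ?D - a" ?D] by auto
  define X where "X = boundary V E Q \<union> Y"
  have "X \<subseteq> V"
    using assms(2,3) Y(1) by (auto simp: X_def boundary_def swap_on_def proper_2_coloring_def)
  moreover have "card X \<le> p"
    using card_Un_le[of "boundary V E Q" Y] Y(2) a p unfolding X_def by linarith
  moreover have "proper_2_coloring (V - X) E (?D - Y) (swap_on Q C2 C1 - boundary V E Q)"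
  proof -
    have "V - X = V - boundary V E Q - Y"
      by (auto simp: X_def)
    then show ?thesis
      using proper_2_coloring_Diff[OF proper_2_coloring_swap_on[OF assms(1,2)] Y(1)] by simp
  qed
  moreover have "card (?D - Y) = a"
    using Y a \<open>finite ?D\<close> by (simp add: card_Diff_subset finite_subset)
  ultimately show ?thesis
    by blast
qed

theorem lemma1:
  fixes V :: "'a set" and E :: "'a \<Rightarrow> 'a \<Rightarrow> bool" and bs :: "'a set list"
    and p :: nat and C1 C2 :: "'a set" and a :: nat
  assumes "graph V E"
    and "path_decomposition V E bs" and "pd_width bs = int p"
    and "proper_2_coloring V E C1 C2" and "card C1 \<ge> card C2"
    and "int (card C2) - int p \<le> int a" and "a \<le> card C1"
  shows "\<exists>X C1' C2'. X \<subseteq> V \<and> card X \<le> p \<and>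
           proper_2_coloring (V - X) E C1' C2' \<and> card C1' = a"
proof -
  \<comment> \<open>The hypothesis card C2 \<le> card C1 only makes the range of a nonempty.\<close>
  have "card C2 \<le> a + p"
    using assms(6) by simp
  moreover have "bag_prefix V bs {}"
    by (simp add: bag_prefix_def)
  moreover have "a \<le> card (swap_on {} C1 C2 - boundary V E {})"
    using assms(7) by simp
  ultimately obtain Q where "Q \<subseteq> V" "a \<le> card (swap_on Q C1 C2 - boundary V E Q)"
    "card (swap_on Q C1 C2 - boundary V E Q) + card (boundary V E Q) \<le> a + p"
    using exists_balanced_swap[OF assms(1-4)] by blast
  then show ?thesis
    using proper_2_coloring_from_balanced_swap[OF assms(1,4)] by blast
qed

end
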